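(* Let $W \subset \mathbb{R}^2$ be the Warsaw Circle. Then the zeroth Milnor-Thurston homology group $\mathcal{H}_0(W)$ is a real vector space of uncountable dimension.
   Context: The Warsaw Circle $W \subset \mathbb{R}^2$ is the union of: the portion of the topologist's sine curve $\{(x,y) : y = \sin(1/x),\ x>0\}$ between the line $x=0$ and its rightmost minimum; the segment $\{(0,y) : -1 \leq y \leq 1\}$; and an arc (disjoint from the rest except at endpoints) joining $(0,-1)$ to that rightmost minimum. Milnor-Thurston (measure) homology: for a topological space $X$ and integer $k \geq 0$, let $C^0(\Delta^k, X)$ be the space of continuous maps from the standard $k$-simplex $\Delta^k$ to $X$, with the compact-open topology. $\mathcal{C}_k(X)$ is the real vector space of finite signed Borel measures on $C^0(\Delta^k,X)$ admitting a compact carrier (a set whose complement contains only Borel sets of measure zero). The boundary $\partial : \mathcal{C}_k(X) \to \mathcal{C}_{k-1}(X)$ is $\partial = \sum_{i=0}^k (-1)^i \partial_i$, where $\partial_i \mu$ is the image measure $A \mapsto \mu(\{\sigma : \sigma\circ\delta_i \in A\})$, with $\delta_i : \Delta^{k-1} \to \Delta^k$ the standard inclusion of the $i$-th face. The homology $\mathcal{H}_*(X)$ of this chain complex is the Milnor-Thurston homology of $X$. *)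

theory Defs
  imports "HOL-Analysis.Analysis" "HOL-Homology.Homology"
begin

text \<open>Portion of the topologist's sine curve between x = 0 and its rightmost minimum
  (2/(3 pi), -1), and the limit segment on the y-axis.\<close>

definition warsaw_sine :: "(real \<times> real) set" where
  "warsaw_sine = {(x, y). 0 < x \<and> x \<le> 2 / (3 * pi) \<and> y = sin (1 / x)}"

definition warsaw_segment :: "(real \<times> real) set" where
  "warsaw_segment = {(0, y) | y. -1 \<le> y \<and> y \<le> 1}"

text \<open>Continuous maps are represented extensionally (fixed to undefined outside the
  domain), as in HOL-Homology's singular simplices.\<close>

definition cmaps :: "'a topology \<Rightarrow> 'b topology \<Rightarrow> ('a \<Rightarrow> 'b) set" where
  "cmaps X Y = {f. continuous_map X Y f \<and> f \<in> extensional (topspace X)}"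

definition compact_open_topology :: "'a topology \<Rightarrow> 'b topology \<Rightarrow> ('a \<Rightarrow> 'b) topology" where
  "compact_open_topology X Y =
     topology (arbitrary union_of
       (finite intersection_of
          (\<lambda>V. \<exists>K U. compactin X K \<and> openin Y U \<and> V = {f \<in> cmaps X Y. f ` K \<subseteq> U})
        relative_to cmaps X Y))"

definition simplex_space :: "nat \<Rightarrow> 'a topology \<Rightarrow> ((nat \<Rightarrow> real) \<Rightarrow> 'a) topology" where
  "simplex_space k X =
     compact_open_topology (subtopology (powertop_real UNIV) (standard_simplex k)) X"

definition borel_sets_of :: "'a topology \<Rightarrow> 'a set set" where
  "borel_sets_of T = sigma_sets (topspace T) {U. openin T U}"

text \<open>A finite signed Borel measure, represented as a real-valued set function which is
  countably additive on Borel sets and (by convention) zero on non-Borel sets.\<close>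

definition finite_signed_borel_measure :: "'a topology \<Rightarrow> ('a set \<Rightarrow> real) \<Rightarrow> bool" where
  "finite_signed_borel_measure T \<mu> \<longleftrightarrow>
     (\<forall>A. A \<notin> borel_sets_of T \<longrightarrow> \<mu> A = 0) \<and>
     (\<forall>A :: nat \<Rightarrow> 'a set. range A \<subseteq> borel_sets_of T \<longrightarrow> disjoint_family A \<longrightarrow>
          (\<lambda>n. \<mu> (A n)) sums \<mu> (\<Union>n. A n))"

definition has_compact_carrier :: "'a topology \<Rightarrow> ('a set \<Rightarrow> real) \<Rightarrow> bool" where
  "has_compact_carrier T \<mu> \<longleftrightarrow>
     (\<exists>K. compactin T K \<and> (\<forall>A \<in> borel_sets_of T. A \<inter> K = {} \<longrightarrow> \<mu> A = 0))"

definition MT_chains :: "'a topology \<Rightarrow> nat \<Rightarrow> (((nat \<Rightarrow> real) \<Rightarrow> 'a) set \<Rightarrow> real) set" where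
  "MT_chains X k = {\<mu>. finite_signed_borel_measure (simplex_space k X) \<mu>
                       \<and> has_compact_carrier (simplex_space k X) \<mu>}"

definition MT_face :: "'a topology \<Rightarrow> nat \<Rightarrow> nat
     \<Rightarrow> (((nat \<Rightarrow> real) \<Rightarrow> 'a) set \<Rightarrow> real) \<Rightarrow> (((nat \<Rightarrow> real) \<Rightarrow> 'a) set \<Rightarrow> real)" where
  "MT_face X k i \<mu> =
     (\<lambda>A. if A \<in> borel_sets_of (simplex_space (k - 1) X)
          then \<mu> {\<sigma> \<in> topspace (simplex_space k X). singular_face k i \<sigma> \<in> A}
          else 0)"

definition MT_boundary :: "'a topology \<Rightarrow> nat
     \<Rightarrow> (((nat \<Rightarrow> real) \<Rightarrow> 'a) set \<Rightarrow> real) \<Rightarrow> (((nat \<Rightarrow> real) \<Rightarrow> 'a) set \<Rightarrow> real)" where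
  "MT_boundary X k \<mu> = (\<lambda>A. \<Sum>i\<le>k. (-1) ^ i * MT_face X k i \<mu> A)"

text \<open>H_0 = C_0 / image of the boundary C_1 -> C_0.  "H_0 has uncountable dimension"
  means: there is an uncountable family of 0-chains whose classes are linearly
  independent in the quotient.\<close>

definition MT_H0_uncountable_dim :: "'a topology \<Rightarrow> bool" where
  "MT_H0_uncountable_dim X \<longleftrightarrow>
     (\<exists>B \<subseteq> MT_chains X 0. uncountable B \<and>
        (\<forall>F c. finite F \<longrightarrow> F \<subseteq> B \<longrightarrow>
           (\<exists>\<nu> \<in> MT_chains X 1. MT_boundary X 1 \<nu> = (\<lambda>A. \<Sum>\<mu>\<in>F. c \<mu> * \<mu> A)) \<longrightarrow>
           (\<forall>\<mu>\<in>F. c \<mu> = 0)))"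

end

theory Submission
  imports Defs "HOL-Real_Asymp.Real_Asymp"
begin

text \<open>Let \<open>D\<^sub>n = sine_tail n\<close> be the part of the sine curve to the left of its \<open>n\<close>-th minimum.
  A singular 1-simplex whose vertices lie at different depths must traverse all the oscillations
  in between, and on a compact set of 1-simplices the parameter time needed for one oscillation
  is bounded below uniformly. Hence for every Milnor-Thurston 1-chain \<open>\<nu>\<close> the values
  \<open>\<partial>\<nu>(\<Delta>\<^sub>n)\<close>, where \<open>\<Delta>\<^sub>n = tail_simplices n\<close> is the set of 0-simplices in \<open>D\<^sub>n\<close>, are absolutely
  summable in \<open>n\<close>. The 0-chains \<open>\<mu>\<^sub>s = peak_chain s\<close>, \<open>0 < s \<le> 1\<close>, are spread over the maxima of
  the sine curve so that \<open>\<mu>\<^sub>s(\<Delta>\<^sub>n) = (n + 1)\<^sup>-\<^sup>s\<close>; a nontrivial finite linear combination of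
  them is dominated by its most slowly decaying term, so it is never a boundary.\<close>

lemma topspace_compact_open_topology [simp]:
  "topspace (compact_open_topology X Y) = cmaps X Y"
  unfolding compact_open_topology_def by (rule topspace_subbase)

lemma openin_compact_open_topology_subbasic:
  assumes "compactin X K" "openin Y U"
  shows "openin (compact_open_topology X Y) {f \<in> cmaps X Y. f ` K \<subseteq> U}"
  unfolding compact_open_topology_def openin_subbase using assms
  by (intro arbitrary_union_of_inc)
    (auto simp: relative_to_def intro!: finite_intersection_of_inc exI[of _ "{f \<in> cmaps X Y. f ` K \<subseteq> U}"])

abbreviation simplex_top :: "nat \<Rightarrow> (nat \<Rightarrow> real) topology" where
  "simplex_top k \<equiv> subtopology (powertop_real UNIV) (standard_simplex k)"

lemma cmaps_simplex_top: "cmaps (simplex_top k) X = {f. singular_simplex k X f}"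
  unfolding cmaps_def singular_simplex_def by simp

lemma topspace_simplex_space [simp]:
  "topspace (simplex_space k X) = {f. singular_simplex k X f}"
  unfolding simplex_space_def topspace_compact_open_topology cmaps_simplex_top ..

lemma continuous_map_simplex_space_eval:
  assumes "v \<in> standard_simplex k"
  shows "continuous_map (simplex_space k X) X (\<lambda>f. f v)"
  unfolding continuous_map_def
proof (intro conjI allI impI)
  show "(\<lambda>f. f v) \<in> topspace (simplex_space k X) \<rightarrow> topspace X"
    using assms by (auto simp: singular_simplex_def continuous_map_def)
  fix U assume "openin X U"
  then have "openin (simplex_space k X) {f \<in> cmaps (simplex_top k) X. f ` {v} \<subseteq> U}"
    unfolding simplex_space_def using assms by (intro openin_compact_open_topology_subbasic) auto
  then show "openin (simplex_space k X) {f \<in> topspace (simplex_space k X). f v \<in> U}"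
    by (simp add: cmaps_simplex_top)
qed

definition simplex0_point :: "nat \<Rightarrow> real" where
  "simplex0_point = (\<lambda>j. if j = 0 then 1 else 0)"

definition edge_point :: "real \<Rightarrow> nat \<Rightarrow> real" where
  "edge_point t = (\<lambda>i. if i = 0 then 1 - t else if i = 1 then t else 0)"

lemma standard_simplex_0_eq: "standard_simplex 0 = {simplex0_point}"
  by (simp add: standard_simplex_0 simplex0_point_def)

lemma edge_point_in_standard_simplex: "t \<in> {0..1} \<Longrightarrow> edge_point t \<in> standard_simplex 1"
  by (auto simp: standard_simplex_def edge_point_def)

lemma singular_face_1_0: "singular_face 1 0 f simplex0_point = f (edge_point 1)"
  by (auto simp: singular_face_def simplical_face_def simplex0_point_def edge_point_def
           intro!: arg_cong[where f=f])

lemma singular_face_1_1: "singular_face 1 1 f simplex0_point = f (edge_point 0)"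
  by (auto simp: singular_face_def simplical_face_def simplex0_point_def edge_point_def
           intro!: arg_cong[where f=f])

lemma continuous_map_edge_point: "continuous_map (top_of_set {0..1}) (simplex_top 1) edge_point"
proof -
  have "continuous_map (top_of_set {0..1}) euclideanreal (\<lambda>t. edge_point t i)" for i
    unfolding edge_point_def by (cases "i = 0"; cases "i = 1") (auto intro!: continuous_intros)
  then show ?thesis
    using edge_point_in_standard_simplex
    by (auto simp: continuous_map_in_subtopology continuous_map_componentwise_UNIV)
qed

lemma singular_simplex_1_path:
  assumes "singular_simplex 1 X \<sigma>"
  shows "continuous_map (top_of_set {0..1}) X (\<sigma> \<circ> edge_point)"
  using assms continuous_map_compose continuous_map_edge_point
  unfolding singular_simplex_def by blast

definition const_simplex :: "'a \<Rightarrow> (nat \<Rightarrow> real) \<Rightarrow> 'a" where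
  "const_simplex p = restrict (\<lambda>_. p) (standard_simplex 0)"

lemma const_simplex_simplex0_point [simp]: "const_simplex p simplex0_point = p"
  by (simp add: const_simplex_def standard_simplex_0_eq)

lemma singular_simplex_const_simplex:
  "p \<in> topspace X \<Longrightarrow> singular_simplex 0 X (const_simplex p)"
  unfolding singular_simplex_def const_simplex_def
  by (auto intro: continuous_map_eq[of _ _ "\<lambda>_. p"])

lemma continuous_map_const_simplex: "continuous_map X (simplex_space 0 X) const_simplex"
  unfolding simplex_space_def compact_open_topology_def
proof (rule continuous_map_into_topology_subbase)
  show "const_simplex p \<in> topspace (topology (arbitrary union_of
      (finite intersection_of P relative_to cmaps (simplex_top 0) X)))"
    if "p \<in> topspace X" for p P
    using that by (simp add: cmaps_simplex_top singular_simplex_const_simplex)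
  fix V assume "\<exists>K U. compactin (simplex_top 0) K \<and> openin X U
      \<and> V = {f \<in> cmaps (simplex_top 0) X. f ` K \<subseteq> U}"
  then obtain K U where K: "K \<subseteq> {simplex0_point}" and U: "openin X U"
    and V: "V = {f \<in> cmaps (simplex_top 0) X. f ` K \<subseteq> U}"
    by (auto simp: compactin_def standard_simplex_0_eq)
  have "{p \<in> topspace X. const_simplex p \<in> V} = (if K = {} then topspace X else U)"
    using K openin_subset[OF U]
    by (auto simp: V cmaps_simplex_top singular_simplex_const_simplex subset_singleton_iff)
  then show "openin X {p \<in> topspace X. const_simplex p \<in> V}"
    using U by simp
qed

lemma sigma_algebra_borel_sets_of: "sigma_algebra (topspace T) (borel_sets_of T)"
  unfolding borel_sets_of_def by (rule sigma_algebra_sigma_sets) (auto dest: openin_subset)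

interpretation borel_sets: sigma_algebra "topspace T" "borel_sets_of T" for T
  by (rule sigma_algebra_borel_sets_of)

lemma borel_sets_of_openin: "openin T U \<Longrightarrow> U \<in> borel_sets_of T"
  unfolding borel_sets_of_def by auto

lemma borel_sets_of_preimage:
  assumes f: "continuous_map S T f" and A: "A \<in> borel_sets_of T"
  shows "{x \<in> topspace S. f x \<in> A} \<in> borel_sets_of S"
  using A unfolding borel_sets_of_def
proof (induction rule: sigma_sets.induct)
  case (Basic a)
  then show ?case using f by (auto simp: continuous_map_def)
next
  case Empty
  then show ?case by (simp add: sigma_sets.Empty)
next
  case (Compl a)
  have "{x \<in> topspace S. f x \<in> topspace T - a} = topspace S - {x \<in> topspace S. f x \<in> a}"
    using f by (auto simp: continuous_map_def)
  then show ?case using Compl by (simp add: sigma_sets.Compl)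
next
  case (Union a)
  have "{x \<in> topspace S. f x \<in> (\<Union>i. a i)} = (\<Union>i. {x \<in> topspace S. f x \<in> a i})" by auto
  then show ?case using Union by (simp add: sigma_sets.Union)
qed

context
  fixes T :: "'a topology" and \<nu> :: "'a set \<Rightarrow> real"
  assumes \<nu>: "finite_signed_borel_measure T \<nu>"
begin

lemma fsbm_sums:
  "range A \<subseteq> borel_sets_of T \<Longrightarrow> disjoint_family A \<Longrightarrow> (\<lambda>n. \<nu> (A n)) sums \<nu> (\<Union>n. A n)"
  using \<nu> unfolding finite_signed_borel_measure_def by blast

lemma fsbm_empty: "\<nu> {} = 0"
proof -
  have "(\<lambda>n::nat. \<nu> {}) sums \<nu> (\<Union>n::nat. {})"
    by (rule fsbm_sums) (auto simp: disjoint_family_on_def)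
  then have "(\<lambda>n::nat. \<nu> {}) \<longlonglongrightarrow> 0"
    by (simp add: sums_summable summable_LIMSEQ_zero)
  then show ?thesis by (simp add: LIMSEQ_const_iff)
qed

lemma fsbm_finite_UN:
  fixes I :: "nat set"
  assumes "finite I" "\<And>i. i \<in> I \<Longrightarrow> A i \<in> borel_sets_of T" "disjoint_family_on A I"
  shows "\<nu> (\<Union>i\<in>I. A i) = (\<Sum>i\<in>I. \<nu> (A i))"
proof -
  define A' where "A' n = (if n \<in> I then A n else {})" for n
  have "(\<lambda>n. \<nu> (A' n)) sums \<nu> (\<Union>n. A' n)"
    by (rule fsbm_sums) (use assms in \<open>auto simp: A'_def disjoint_family_on_def\<close>)
  moreover have "(\<Union>n. A' n) = (\<Union>i\<in>I. A i)"
    by (auto simp: A'_def split: if_splits)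
  moreover have "(\<lambda>n. \<nu> (A' n)) sums (\<Sum>i\<in>I. \<nu> (A i))"
    using sums_finite[of I "\<lambda>n. \<nu> (A' n)"] assms(1) by (simp add: A'_def fsbm_empty)
  ultimately show ?thesis using sums_unique2 by metis
qed

lemma fsbm_split:
  assumes "A \<in> borel_sets_of T" "B \<in> borel_sets_of T"
  shows "\<nu> A = \<nu> (A \<inter> B) + \<nu> (A - B)"
proof -
  have "\<nu> (\<Union>i\<in>{0::nat, 1}. if i = 0 then A \<inter> B else A - B) = \<nu> (A \<inter> B) + \<nu> (A - B)"
    by (subst fsbm_finite_UN) (use assms in \<open>auto simp: disjoint_family_on_def\<close>)
  moreover have "(\<Union>i\<in>{0::nat, 1}. if i = 0 then A \<inter> B else A - B) = A"
    by auto
  ultimately show ?thesis by simp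
qed

lemma fsbm_summable_abs:
  assumes "range A \<subseteq> borel_sets_of T" "disjoint_family A"
  shows "summable (\<lambda>n. \<bar>\<nu> (A n)\<bar>)"
proof -
  define P where "P n = (if \<nu> (A n) \<ge> 0 then A n else {})" for n
  define N where "N n = (if \<nu> (A n) < 0 then A n else {})" for n
  have "(\<lambda>n. \<nu> (P n)) sums \<nu> (\<Union>n. P n)" "(\<lambda>n. \<nu> (N n)) sums \<nu> (\<Union>n. N n)"
    by (rule fsbm_sums; use assms in \<open>auto simp: P_def N_def disjoint_family_on_def\<close>)+
  then have "summable (\<lambda>n. \<nu> (P n) - \<nu> (N n))"
    by (intro summable_diff) (auto intro: sums_summable)
  moreover have "\<nu> (P n) - \<nu> (N n) = \<bar>\<nu> (A n)\<bar>" for n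
    by (auto simp: P_def N_def fsbm_empty)
  ultimately show ?thesis by simp
qed

end

text \<open>On the carrier \<open>P n\<close> splits into the sets \<open>P n \<inter> Q (n - j)\<close>, \<open>j \<le> L\<close>, and for fixed \<open>j\<close>
  these are disjoint in \<open>n\<close>.\<close>

lemma fsbm_summable_abs_banded:
  assumes \<nu>: "finite_signed_borel_measure T \<nu>"
    and null: "\<And>A. A \<in> borel_sets_of T \<Longrightarrow> A \<inter> K = {} \<Longrightarrow> \<nu> A = 0"
    and Q: "disjoint_family Q" "\<And>m. Q m \<in> borel_sets_of T"
    and P: "\<And>n. P n \<in> borel_sets_of T"
    and band: "\<And>n. L \<le> n \<Longrightarrow> P n \<inter> K \<subseteq> (\<Union>j\<le>L. Q (n - j))"
  shows "summable (\<lambda>n. \<bar>\<nu> (P n)\<bar>)"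
proof -
  have "summable (\<lambda>n. \<bar>\<nu> (P (n + j) \<inter> Q n)\<bar>)" for j
    using Q P by (intro fsbm_summable_abs[OF \<nu>]) (auto simp: disjoint_family_on_def)
  then have "summable (\<lambda>n. \<bar>\<nu> (P n \<inter> Q (n - j))\<bar>)" for j
    by (subst summable_iff_shift[symmetric, of _ j]) simp
  then have sum_summable: "summable (\<lambda>n. \<Sum>j\<le>L. \<bar>\<nu> (P n \<inter> Q (n - j))\<bar>)"
    by (rule summable_sum)
  have "\<bar>\<nu> (P n)\<bar> \<le> (\<Sum>j\<le>L. \<bar>\<nu> (P n \<inter> Q (n - j))\<bar>)" if "L \<le> n" for n
  proof -
    define U where "U = (\<Union>j\<le>L. Q (n - j))"
    have U: "U \<in> borel_sets_of T"
      unfolding U_def using Q(2) by (intro borel_sets.finite_UN) auto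
    have "\<nu> (P n - U) = 0"
      using band[OF that] P U by (intro null) (auto simp: U_def)
    moreover have "\<nu> (P n \<inter> U) = (\<Sum>j\<le>L. \<nu> (P n \<inter> Q (n - j)))"
    proof -
      have "inj_on (\<lambda>j. n - j) {..L}"
        using that by (auto simp: inj_on_def)
      then have "disjoint_family_on (\<lambda>j. Q (n - j)) {..L}"
        using Q(1) by (simp add: disjoint_family_on_def inj_on_def) blast
      then have "disjoint_family_on (\<lambda>j. P n \<inter> Q (n - j)) {..L}"
        by (auto simp: disjoint_family_on_def)
      then have "\<nu> (\<Union>j\<le>L. P n \<inter> Q (n - j)) = (\<Sum>j\<le>L. \<nu> (P n \<inter> Q (n - j)))"
        using P Q(2) by (intro fsbm_finite_UN[OF \<nu>]) auto
      moreover have "P n \<inter> U = (\<Union>j\<le>L. P n \<inter> Q (n - j))"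
        by (auto simp: U_def)
      ultimately show ?thesis by simp
    qed
    ultimately have "\<nu> (P n) = (\<Sum>j\<le>L. \<nu> (P n \<inter> Q (n - j)))"
      using fsbm_split[OF \<nu> P U] by simp
    then show ?thesis by (simp add: sum_abs)
  qed
  then show ?thesis
    by (intro summable_comparison_test'[OF sum_summable, of L]) auto
qed

lemma decseq_disjoint_family_Diff_Suc:
  "decseq D \<Longrightarrow> disjoint_family (\<lambda>m. D m - D (Suc m))"
  using disjoint_family_Suc[of "\<lambda>m. - D m"] by (simp add: decseq_Suc_iff Diff_eq Int_commute)

lemma decseq_Diff_Suc_witness:
  assumes "decseq D" "x \<in> D p" "x \<notin> D q"
  shows "\<exists>m. p \<le> m \<and> m < q \<and> x \<in> D m - D (Suc m)"
  using assms(3)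
proof (induction q)
  case 0
  then show ?case using assms(1,2) by (auto simp: decseq_def)
next
  case (Suc q)
  show ?case
  proof (cases "x \<in> D q")
    case True
    have "p \<le> q"
      using Suc.prems assms(1,2) not_less_eq_eq by (auto simp: decseq_def)
    then show ?thesis using True Suc.prems by auto
  next
    case False
    then show ?thesis using Suc.IH less_SucI by blast
  qed
qed

section \<open>The topologist's sine curve\<close>

definition sine_min :: "nat \<Rightarrow> real" where
  "sine_min n = 2 / ((4 * real n + 3) * pi)"

definition sine_max :: "nat \<Rightarrow> real" where
  "sine_max n = 2 / ((4 * real n + 1) * pi)"

lemma sin_inverse_sine_min [simp]: "sin (1 / sine_min n) = -1"
proof -
  have "1 / sine_min n = 3/2 * pi + 2 * real n * pi"
    by (simp add: sine_min_def field_simps)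
  then show ?thesis using sin_3over2_pi by (simp add: sin_add)
qed

lemma sin_inverse_sine_max [simp]: "sin (1 / sine_max n) = 1"
proof -
  have "1 / sine_max n = pi/2 + 2 * real n * pi"
    by (simp add: sine_max_def field_simps)
  then show ?thesis by (simp add: sin_add)
qed

lemma sine_min_pos [simp]: "0 < sine_min n"
  by (simp add: sine_min_def)

lemma sine_max_pos [simp]: "0 < sine_max n"
  by (simp add: sine_max_def)

lemma sine_min_0: "sine_min 0 = 2 / (3 * pi)"
  by (simp add: sine_min_def)

lemma two_div_less_two_div_iff: "0 < a \<Longrightarrow> 0 < b \<Longrightarrow> 2 / a < 2 / b \<longleftrightarrow> b < (a::real)"
  by (simp add: divide_simps)

lemma sine_min_less_iff [simp]: "sine_min m < sine_min n \<longleftrightarrow> n < m"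
  unfolding sine_min_def by (subst two_div_less_two_div_iff) (auto intro: add_pos_nonneg)

lemma sine_min_le_iff [simp]: "sine_min m \<le> sine_min n \<longleftrightarrow> n \<le> m"
  by (meson sine_min_less_iff not_le)

lemma sine_max_less_sine_min_iff: "sine_max k < sine_min n \<longleftrightarrow> n < k"
proof -
  have "sine_max k < sine_min n \<longleftrightarrow> 4 * real n + 3 < 4 * real k + 1"
    unfolding sine_max_def sine_min_def by (subst two_div_less_two_div_iff) (auto intro: add_pos_nonneg)
  then show ?thesis by linarith
qed

lemma sine_min_less_sine_max_iff: "sine_min n < sine_max k \<longleftrightarrow> k \<le> n"
proof -
  have "sine_min n < sine_max k \<longleftrightarrow> 4 * real k + 1 < 4 * real n + 3"
    unfolding sine_max_def sine_min_def by (subst two_div_less_two_div_iff) (auto intro: add_pos_nonneg)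
  then show ?thesis by linarith
qed

lemma sine_max_tendsto_0: "sine_max \<longlonglongrightarrow> 0"
  unfolding sine_max_def by real_asymp

definition sine_tail :: "nat \<Rightarrow> (real \<times> real) set" where
  "sine_tail n = {(x, sin (1 / x)) | x. 0 < x \<and> x < sine_min n}"

lemma mem_sine_tail_iff:
  "p \<in> sine_tail n \<longleftrightarrow> 0 < fst p \<and> fst p < sine_min n \<and> snd p = sin (1 / fst p)"
  by (cases p) (auto simp: sine_tail_def)

lemma decseq_sine_tail: "decseq sine_tail"
  unfolding decseq_def by (auto simp: mem_sine_tail_iff) (meson sine_min_le_iff less_le_trans)

lemma sine_tail_subset_warsaw_sine: "sine_tail n \<subseteq> warsaw_sine"
  using sine_min_le_iff[of n 0] by (auto simp: mem_sine_tail_iff warsaw_sine_def sine_min_0)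

lemma sine_max_mem_sine_tail_iff: "(sine_max k, 1) \<in> sine_tail n \<longleftrightarrow> n < k"
  by (simp add: mem_sine_tail_iff sine_max_less_sine_min_iff)

text \<open>A path \<open>h\<close> on \<open>[0, 1]\<close> is \<open>N\<close>-slow if it needs parameter time more than \<open>1 / N\<close> to
  move between heights \<open>-1\<close> and \<open>1\<close>, i.e.\ between a minimum and a maximum of the sine curve.\<close>

definition slow_path :: "nat \<Rightarrow> (real \<Rightarrow> real \<times> real) \<Rightarrow> bool" where
  "slow_path N h \<longleftrightarrow> (\<forall>s t. 0 \<le> s \<longrightarrow> s \<le> t \<longrightarrow> t \<le> 1 \<longrightarrow> t - s \<le> 1 / real N \<longrightarrow>
      \<bar>snd (h s) - snd (h t)\<bar> < 2)"

lemma slow_path_reverse: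
  assumes "slow_path N h"
  shows "slow_path N (\<lambda>t. h (1 - t))"
  unfolding slow_path_def
proof (intro allI impI)
  fix s t :: real
  assume "0 \<le> s" "s \<le> t" "t \<le> 1" "t - s \<le> 1 / real N"
  then show "\<bar>snd (h (1 - s)) - snd (h (1 - t))\<bar> < 2"
    using assms[unfolded slow_path_def, rule_format, of "1 - t" "1 - s"]
    by (simp add: abs_minus_commute)
qed

lemma slow_path_mono:
  assumes "slow_path M h" "0 < M" "M \<le> N"
  shows "slow_path N h"
proof -
  have "1 / real N \<le> 1 / real M"
    using assms(2,3) by (simp add: frac_le)
  then show ?thesis
    using assms(1) unfolding slow_path_def by (meson order.trans)
qed

text \<open>Between the minima \<open>sine_min (n + j)\<close> and \<open>sine_min (n + j + 1)\<close> lies the maximum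
  \<open>sine_max (n + j + 1)\<close>, so each of these steps costs the parameter more than \<open>\<delta>\<close>.\<close>

lemma sine_graph_crossing_time:
  fixes x :: "real \<Rightarrow> real"
  assumes "a \<le> b" and x: "continuous_on {a..b} x" "x a = sine_min n"
    and slow: "\<And>u v. a \<le> u \<Longrightarrow> u \<le> v \<Longrightarrow> v \<le> b \<Longrightarrow> v - u \<le> \<delta> \<Longrightarrow>
      \<bar>sin (1 / x u) - sin (1 / x v)\<bar> < 2"
    and "x b \<le> sine_min (n + j)"
  shows "a + real j * \<delta> \<le> b"
proof -
  have "\<exists>t. a \<le> t \<and> a + real j * \<delta> \<le> t \<and> t \<le> b \<and> x t = sine_min (n + j)"
    using \<open>x b \<le> sine_min (n + j)\<close>
  proof (induction j)
    case 0
    then show ?case using \<open>a \<le> b\<close> x by auto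
  next
    case (Suc j)
    have "sine_min (n + Suc j) \<le> sine_min (n + j)"
      by simp
    then obtain t where t: "a \<le> t" "a + real j * \<delta> \<le> t" "t \<le> b" "x t = sine_min (n + j)"
      using Suc by fastforce
    have cont: "continuous_on {t..b} x"
      using x(1) by (rule continuous_on_subset) (use t(1) in auto)
    have order: "sine_min (n + Suc j) < sine_max (n + Suc j)" "sine_max (n + Suc j) < sine_min (n + j)"
      by (simp_all add: sine_min_less_sine_max_iff sine_max_less_sine_min_iff)
    then have "x b \<le> sine_max (n + Suc j)" "sine_max (n + Suc j) \<le> x t"
      using Suc.prems t(4) by linarith+
    then obtain v where v: "t \<le> v" "v \<le> b" "x v = sine_max (n + Suc j)"
      using IVT2'[OF _ _ t(3) cont] by blast
    have "continuous_on {v..b} x"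
      using cont by (rule continuous_on_subset) (use v in auto)
    moreover have "sine_min (n + Suc j) \<le> x v"
      using v(3) order(1) by simp
    ultimately obtain u where u: "v \<le> u" "u \<le> b" "x u = sine_min (n + Suc j)"
      using IVT2'[of x b _ v, OF Suc.prems _ v(2)] by blast
    have "\<not> v - t \<le> \<delta>"
      using slow[of t v] t(1,4) v by auto
    then show ?case
      using t(1,2) u v by (intro exI[of _ u]) (auto simp: algebra_simps)
  qed
  then show ?thesis by auto
qed

text \<open>The classical reason why the sine curve is not path connected to the segment:
  near \<open>x = 0\<close> every small time interval would contain both a minimum and a maximum.\<close>

lemma sine_graph_path_fst_nonzero:
  fixes h :: "real \<Rightarrow> real \<times> real"
  assumes "s < t" and h: "continuous_on {s..t} h"
    and graph: "\<And>u. s < u \<Longrightarrow> u \<le> t \<Longrightarrow> 0 < fst (h u) \<and> snd (h u) = sin (1 / fst (h u))"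
  shows "fst (h s) \<noteq> 0"
proof
  assume fst_s: "fst (h s) = 0"
  obtain d where "d > 0" and d: "\<And>u. u \<in> {s..t} \<Longrightarrow> dist u s < d \<Longrightarrow> dist (h u) (h s) < 1/2"
    using h[unfolded continuous_on_iff, rule_format, of s "1/2"] \<open>s < t\<close> by auto
  define t1 where "t1 = min (s + d/2) t"
  have t1: "s < t1" "t1 \<le> t"
    using \<open>d > 0\<close> \<open>s < t\<close> by (auto simp: t1_def)
  have close: "dist (h u) (h s) < 1/2" if "s \<le> u" "u \<le> t1" for u
    using d[of u] that t1 \<open>d > 0\<close> by (auto simp: t1_def dist_real_def)
  have "0 < fst (h t1)"
    using graph t1 by blast
  then have "eventually (\<lambda>k. sine_max k < fst (h t1)) sequentially"
    by (rule order_tendstoD(2)[OF sine_max_tendsto_0])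
  then obtain k where k: "sine_max k < fst (h t1)"
    by (auto simp: eventually_sequentially)
  have cont: "continuous_on {s..t1} (\<lambda>u. fst (h u))"
    by (intro continuous_on_fst continuous_on_subset[OF h]) (use t1 in auto)
  have "sine_min k < sine_max k"
    by (simp add: sine_min_less_sine_max_iff)
  then obtain ta tb where ta: "s \<le> ta" "ta \<le> t1" "fst (h ta) = sine_min k"
    and tb: "s \<le> tb" "tb \<le> t1" "fst (h tb) = sine_max k"
    using IVT'[of "\<lambda>u. fst (h u)" s "sine_min k" t1, OF _ _ _ cont]
      IVT'[of "\<lambda>u. fst (h u)" s "sine_max k" t1, OF _ _ _ cont] t1 fst_s k
    by (smt (verit) sine_max_pos sine_min_pos)
  have "ta \<noteq> s" "tb \<noteq> s"
    using ta(3) tb(3) fst_s by (metis sine_max_pos sine_min_pos less_irrefl)+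
  then have "snd (h ta) = -1" "snd (h tb) = 1"
    using graph[of ta] graph[of tb] ta tb t1 by auto
  moreover have "dist (snd (h ta)) (snd (h tb)) < 1"
    using close[OF ta(1,2)] close[OF tb(1,2)] dist_snd_le[of "h ta" "h tb"]
      dist_triangle2[of "h ta" "h tb" "h s"] by linarith
  ultimately show False
    by (simp add: dist_real_def)
qed

lemma sine_graph_path_start:
  fixes h :: "real \<Rightarrow> real \<times> real"
  assumes "s < t" and h: "continuous_on {s..t} h"
    and tail: "\<And>u. s < u \<Longrightarrow> u \<le> t \<Longrightarrow> h u \<in> sine_tail n"
  shows "0 < fst (h s) \<and> fst (h s) \<le> sine_min n \<and> snd (h s) = sin (1 / fst (h s))"
proof -
  define F where "F = at_right s"
  have "(h \<longlongrightarrow> h s) F"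
    using h \<open>s < t\<close> by (simp add: F_def continuous_on_def at_within_Icc_at_right[symmetric])
  then have fst_lim: "((\<lambda>u. fst (h u)) \<longlongrightarrow> fst (h s)) F"
    and snd_lim: "((\<lambda>u. snd (h u)) \<longlongrightarrow> snd (h s)) F"
    by (auto intro: tendsto_fst tendsto_snd)
  have ev_tail: "eventually (\<lambda>u. h u \<in> sine_tail n) F"
    using eventually_at_right_real[OF \<open>s < t\<close>] unfolding F_def
    by (rule eventually_mono) (auto intro: tail)
  have "0 \<le> fst (h s)" "fst (h s) \<le> sine_min n"
    using ev_tail
    by (auto intro!: tendsto_lowerbound[OF fst_lim] tendsto_upperbound[OF fst_lim]
             elim!: eventually_mono simp: F_def mem_sine_tail_iff)
  moreover have "fst (h s) \<noteq> 0"
    using \<open>s < t\<close> h by (rule sine_graph_path_fst_nonzero) (use tail in \<open>auto simp: mem_sine_tail_iff\<close>)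
  moreover have "snd (h s) = sin (1 / fst (h s))" if "0 < fst (h s)"
  proof -
    have "((\<lambda>u. sin (1 / fst (h u))) \<longlongrightarrow> sin (1 / fst (h s))) F"
      using that by (intro tendsto_sin tendsto_divide fst_lim tendsto_const) auto
    moreover have "eventually (\<lambda>u. sin (1 / fst (h u)) = snd (h u)) F"
      using ev_tail by (rule eventually_mono) (auto simp: mem_sine_tail_iff)
    ultimately have "((\<lambda>u. snd (h u)) \<longlongrightarrow> sin (1 / fst (h s))) F"
      by (rule Lim_transform_eventually)
    then show ?thesis
      using tendsto_unique[OF _ snd_lim] by (simp add: F_def)
  qed
  ultimately show ?thesis by auto
qed

section \<open>Compact families of singular 1-simplices are uniformly slow\<close>

lemma unit_interval_grid_index:
  fixes M :: nat and s :: real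
  assumes "0 < M" "0 \<le> s" "s \<le> 1"
  obtains j where "j < M" "real j / real M \<le> s" "s \<le> real (Suc j) / real M"
proof (cases "s = 1")
  case True
  then show thesis
    using that[of "M - 1"] assms(1) by (simp add: of_nat_diff)
next
  case False
  define j where "j = nat \<lfloor>s * real M\<rfloor>"
  have j: "real j \<le> s * real M" "s * real M < real j + 1"
    using assms(2) by (simp_all add: j_def)
  have "s * real M < real M"
    using False assms by simp
  then have "j < M"
    using j by linarith
  moreover have "real j / real M \<le> s" "s \<le> real (Suc j) / real M"
    using j assms(1) by (simp_all add: divide_simps)
  ultimately show thesis
    using that by blast
qed

text \<open>The two points lie in one grid interval or in two adjacent ones, which share an endpoint.\<close>

lemma grid_close_dist:
  fixes h :: "real \<Rightarrow> 'a::metric_space" and c :: "nat \<Rightarrow> 'a"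
  assumes "0 < M"
    and close: "\<And>j t. j < M \<Longrightarrow> real j / real M \<le> t \<Longrightarrow> t \<le> real (Suc j) / real M \<Longrightarrow>
      dist (h t) (c j) < e"
    and st: "0 \<le> s" "s \<le> t" "t \<le> 1" "t - s \<le> 1 / real M"
  shows "dist (h s) (h t) < 4 * e"
proof -
  obtain j where j: "j < M" "real j / real M \<le> s" "s \<le> real (Suc j) / real M"
    using unit_interval_grid_index[OF \<open>0 < M\<close> st(1)] st by auto
  have "0 < e"
    using close[OF j] by (meson zero_le_dist le_less_trans)
  have same_interval: "dist (h u) (h v) < 2 * e"
    if "i < M" "real i / real M \<le> u" "u \<le> real (Suc i) / real M"
      "real i / real M \<le> v" "v \<le> real (Suc i) / real M" for i u v
    using close[of i u] close[of i v] that dist_triangle2[of "h u" "h v" "c i"] by linarith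
  show ?thesis
  proof (cases "t \<le> real (Suc j) / real M")
    case True
    have "real j / real M \<le> t"
      using j(2) st(2) by linarith
    then have "dist (h s) (h t) < 2 * e"
      using same_interval[OF j] True by blast
    then show ?thesis
      using \<open>0 < e\<close> by linarith
  next
    case False
    define p where "p = real (Suc j) / real M"
    have "p < 1"
      using False st(3) by (simp add: p_def)
    then have "Suc j < M"
      using \<open>0 < M\<close> by (simp add: p_def divide_simps)
    have "t \<le> real (Suc (Suc j)) / real M"
      using j(3) st(4) by (simp add: add_divide_distrib)
    then have "dist (h p) (h t) < 2 * e"
      using same_interval[OF \<open>Suc j < M\<close>, of p t] False by (simp add: p_def)
    moreover have "dist (h s) (h p) < 2 * e"
      using same_interval[OF j(1), of s p] j \<open>0 < M\<close> by (simp add: p_def divide_right_mono)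
    ultimately show ?thesis
      using dist_triangle[of "h s" "h t" "h p"] by linarith
  qed
qed

lemma compactin_uniform_index:
  fixes P :: "nat \<Rightarrow> 'a \<Rightarrow> bool"
  assumes K: "compactin X K"
    and local: "\<And>x. x \<in> K \<Longrightarrow> \<exists>V M. openin X V \<and> x \<in> V \<and> (\<forall>y\<in>V. \<forall>N\<ge>M. P N y)"
  obtains M where "\<And>y N. y \<in> K \<Longrightarrow> M \<le> N \<Longrightarrow> P N y"
proof -
  obtain V M where VM: "\<And>x. x \<in> K \<Longrightarrow> openin X (V x) \<and> x \<in> V x \<and> (\<forall>y\<in>V x. \<forall>N\<ge>M x. P N y)"
    using local by metis
  then obtain \<F> where "finite \<F>" "\<F> \<subseteq> V ` K" "K \<subseteq> \<Union>\<F>"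
    using K unfolding compactin_def by (metis (no_types, lifting) imageE UN_I subsetI)
  then obtain F where F: "finite F" "F \<subseteq> K" "K \<subseteq> (\<Union>x\<in>F. V x)"
    by (metis finite_subset_image)
  show thesis
  proof (rule that)
    fix y N assume "y \<in> K" "(\<Sum>x\<in>F. M x) \<le> N"
    then obtain x where "x \<in> F" "y \<in> V x"
      using F(3) by blast
    moreover have "M x \<le> N"
      using \<open>x \<in> F\<close> F(1) \<open>(\<Sum>x\<in>F. M x) \<le> N\<close> member_le_sum[of x F M] by simp
    ultimately show "P N y"
      using VM F(2) by blast
  qed
qed

lemma slow_path_of_grid_close:
  assumes "0 < M"
    and "\<And>j t. j < M \<Longrightarrow> real j / real M \<le> t \<Longrightarrow> t \<le> real (Suc j) / real M \<Longrightarrow>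
      dist (h t) (c j) < 1/2"
  shows "slow_path M h"
  unfolding slow_path_def
proof (intro allI impI)
  fix s t :: real assume "0 \<le> s" "s \<le> t" "t \<le> 1" "t - s \<le> 1 / real M"
  then have "dist (h s) (h t) < 4 * (1/2)"
    using assms by (intro grid_close_dist[where c = c]) auto
  then show "\<bar>snd (h s) - snd (h t)\<bar> < 2"
    using dist_snd_le[of "h s" "h t"] by (simp add: dist_real_def)
qed

lemma continuous_on_grid_oscillation:
  fixes h :: "real \<Rightarrow> 'a::metric_space"
  assumes "continuous_on {0..1} h" "0 < e"
  obtains M where "0 < M" "\<And>j t. j < M \<Longrightarrow> real j / real M \<le> t \<Longrightarrow> t \<le> real (Suc j) / real M \<Longrightarrow>
    dist (h t) (h (real j / real M)) < e"
proof -
  have "uniformly_continuous_on {0..1} h"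
    using assms(1) by (rule compact_uniformly_continuous) simp
  then obtain d where "d > 0"
    and d: "\<And>u v. u \<in> {0..1} \<Longrightarrow> v \<in> {0..1} \<Longrightarrow> dist v u < d \<Longrightarrow> dist (h v) (h u) < e"
    using assms(2) unfolding uniformly_continuous_on_def by blast
  obtain M :: nat where "0 < M" "inverse (real M) < d"
    using ex_inverse_of_nat_less[OF \<open>d > 0\<close>] by blast
  have "dist (h t) (h (real j / real M)) < e"
    if "j < M" "real j / real M \<le> t" "t \<le> real (Suc j) / real M" for j t
  proof (rule d)
    have "0 \<le> real j / real M" "real (Suc j) / real M \<le> 1"
      using that(1) by (simp_all add: divide_simps)
    then have "0 \<le> t" "t \<le> 1" "real j / real M \<le> 1"
      using that(2,3) by linarith+
    then show "t \<in> {0..1}" "real j / real M \<in> {0..1}"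
      by simp_all
    show "dist t (real j / real M) < d"
      using that \<open>inverse (real M) < d\<close> \<open>0 < M\<close>
      by (auto simp: dist_real_def divide_simps)
  qed
  then show thesis
    using that \<open>0 < M\<close> by blast
qed

lemma singular_simplex_slow_nbhd:
  assumes \<sigma>: "singular_simplex 1 (top_of_set S) \<sigma>"
  shows "\<exists>V M. openin (simplex_space 1 (top_of_set S)) V \<and> \<sigma> \<in> V \<and>
    (\<forall>\<tau>\<in>V. \<forall>N\<ge>M. slow_path N (\<tau> \<circ> edge_point))"
proof -
  let ?X = "simplex_space 1 (top_of_set S)"
  have path: "continuous_map (top_of_set {0..1}) (top_of_set S) (\<sigma> \<circ> edge_point)"
    using \<sigma> by (rule singular_simplex_1_path)
  then obtain M where "0 < M" and osc: "\<And>j t. j < M \<Longrightarrow> real j / real M \<le> t \<Longrightarrow>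
      t \<le> real (Suc j) / real M \<Longrightarrow> dist (\<sigma> (edge_point t)) (\<sigma> (edge_point (real j / real M))) < 1/2"
    using continuous_on_grid_oscillation[of "\<sigma> \<circ> edge_point" "1/2"]
    by (auto simp: continuous_map_in_subtopology)
  define I where "I j = {real j / real M .. real (Suc j) / real M}" for j
  define V where "V = (\<Inter>j<M. {f \<in> cmaps (simplex_top 1) (top_of_set S).
    f ` edge_point ` I j \<subseteq> S \<inter> ball (\<sigma> (edge_point (real j / real M))) (1/2)})"
  have "openin ?X V"
    unfolding V_def
  proof (rule openin_INT2)
    fix j assume "j \<in> {..<M}"
    then have "I j \<subseteq> {0..1}"
      by (auto simp: I_def divide_simps)
    then have "compactin (simplex_top 1) (edge_point ` I j)"
      by (intro image_compactin[OF _ continuous_map_edge_point]) (simp add: compactin_subtopology I_def)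
    then show "openin ?X {f \<in> cmaps (simplex_top 1) (top_of_set S).
        f ` edge_point ` I j \<subseteq> S \<inter> ball (\<sigma> (edge_point (real j / real M))) (1/2)}"
      unfolding simplex_space_def
      by (intro openin_compact_open_topology_subbasic openin_open_Int) auto
  qed (use \<open>0 < M\<close> in auto)
  moreover have "\<sigma> \<in> V"
  proof -
    have "t \<in> {0..1}" if "j < M" "t \<in> I j" for j t
    proof -
      have "0 \<le> real j / real M" "real (Suc j) / real M \<le> 1"
        using that(1) by (simp_all add: divide_simps)
      moreover have "real j / real M \<le> t" "t \<le> real (Suc j) / real M"
        using that(2) by (simp_all add: I_def)
      ultimately have "0 \<le> t" "t \<le> 1"
        by linarith+
      then show ?thesis
        by simp
    qed
    then have "(\<sigma> \<circ> edge_point) ` I j \<subseteq> S" if "j < M" for j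
      using path that by (auto simp: continuous_map_in_subtopology)
    then show ?thesis
      using \<sigma> osc by (auto simp: V_def I_def cmaps_simplex_top dist_commute)
  qed
  moreover have "slow_path N (\<tau> \<circ> edge_point)" if "\<tau> \<in> V" "M \<le> N" for \<tau> N
  proof (rule slow_path_mono[OF slow_path_of_grid_close \<open>0 < M\<close> \<open>M \<le> N\<close>])
    fix j t assume "j < M" "real j / real M \<le> t" "t \<le> real (Suc j) / real M"
    then have "edge_point t \<in> edge_point ` I j"
      by (simp add: I_def)
    moreover have "\<tau> ` edge_point ` I j \<subseteq> ball (\<sigma> (edge_point (real j / real M))) (1/2)"
      using \<open>\<tau> \<in> V\<close> \<open>j < M\<close> by (simp add: V_def)
    ultimately have "\<tau> (edge_point t) \<in> ball (\<sigma> (edge_point (real j / real M))) (1/2)"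
      by blast
    then show "dist ((\<tau> \<circ> edge_point) t) (\<sigma> (edge_point (real j / real M))) < 1/2"
      by (simp add: dist_commute)
  qed (use \<open>0 < M\<close> in simp)
  ultimately show ?thesis
    by blast
qed

lemma compactin_simplex_space_slow:
  assumes K: "compactin (simplex_space 1 (top_of_set S)) K"
  obtains N where "0 < N" "\<And>\<sigma>. \<sigma> \<in> K \<Longrightarrow> slow_path N (\<sigma> \<circ> edge_point)"
proof -
  have "K \<subseteq> {\<sigma>. singular_simplex 1 (top_of_set S) \<sigma>}"
    using compactin_subset_topspace[OF K] by simp
  then obtain M where "\<And>\<sigma> N. \<sigma> \<in> K \<Longrightarrow> M \<le> N \<Longrightarrow> slow_path N (\<sigma> \<circ> edge_point)"
    using compactin_uniform_index[OF K, of "\<lambda>N \<tau>. slow_path N (\<tau> \<circ> edge_point)"]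
      singular_simplex_slow_nbhd by blast
  then show thesis
    using that[of "Suc M"] by simp
qed

definition tail_weight :: "real \<Rightarrow> nat \<Rightarrow> real" where
  "tail_weight s k = (real k + 1) powr (-s) - (real k + 2) powr (-s)"

definition tail_measure :: "real \<Rightarrow> nat measure" where
  "tail_measure s = density (count_space UNIV) (\<lambda>k. ennreal (tail_weight s k))"

lemma tail_weight_nonneg: "0 < s \<Longrightarrow> 0 \<le> tail_weight s k"
  unfolding tail_weight_def by (auto intro!: powr_mono2')

lemma tail_weight_tail_sums:
  assumes "0 < s"
  shows "(\<lambda>k. tail_weight s k * indicator {n..} k) sums ((real n + 1) powr (-s))"
proof -
  define F where "F i = (real (i + n) + 1) powr (-s)" for i
  have "filterlim (\<lambda>i. real (i + n) + 1) at_top sequentially"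
    by real_asymp
  then have "F \<longlonglongrightarrow> 0"
    unfolding F_def using assms by (intro tendsto_neg_powr) auto
  then have "(\<lambda>i. F i - F (Suc i)) sums F 0"
    using telescope_sums' by fastforce
  moreover have "F i - F (Suc i) = tail_weight s (i + n) * indicator {n..} (i + n)" for i
    by (simp add: F_def tail_weight_def add_ac)
  moreover have "(\<Sum>i<n. tail_weight s i * indicator {n..} i) = 0"
    by simp
  ultimately show ?thesis
    using sums_iff_shift[of "\<lambda>k. tail_weight s k * indicator {n..} k" n] by (simp add: F_def)
qed

lemma emeasure_tail_measure_atLeast:
  assumes "0 < s"
  shows "emeasure (tail_measure s) {n..} = ennreal ((real n + 1) powr (-s))"
proof -
  have "emeasure (tail_measure s) {n..} = suminf (\<lambda>k. ennreal (tail_weight s k) * indicator {n..} k)"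
    unfolding tail_measure_def by (simp add: emeasure_density nn_integral_count_space_nat)
  also have "\<dots> = suminf (\<lambda>k. ennreal (tail_weight s k * indicator {n..} k))"
    by (intro arg_cong[where f = suminf] ext) (simp add: indicator_def)
  also have "\<dots> = ennreal (suminf (\<lambda>k. tail_weight s k * indicator {n..} k))"
    using sums_summable[OF tail_weight_tail_sums[OF assms, of n]] tail_weight_nonneg[OF assms]
    by (intro suminf_ennreal2) auto
  finally show ?thesis
    using tail_weight_tail_sums[OF assms, of n] by (simp add: sums_iff)
qed

lemma finite_measure_tail_measure: "0 < s \<Longrightarrow> finite_measure (tail_measure s)"
  using emeasure_tail_measure_atLeast[of s 0]
  by (intro finite_measureI) (simp add: tail_measure_def atLeast_0)

lemma measure_tail_measure_atLeast:
  "0 < s \<Longrightarrow> measure (tail_measure s) {n..} = (real n + 1) powr (-s)"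
  using emeasure_tail_measure_atLeast[of s n] by (simp add: measure_def)

section \<open>Independence of the sequences \<open>(n + 1) powr -s\<close> modulo summable ones\<close>

lemma eventually_sum_powr_ge_leading_term:
  fixes S :: "real set" and c :: "real \<Rightarrow> real"
  assumes "finite S" "s0 \<in> S" "\<And>s. s \<in> S \<Longrightarrow> s \<noteq> s0 \<Longrightarrow> s0 < s" "c s0 \<noteq> 0"
  shows "eventually (\<lambda>n. \<bar>c s0\<bar> / 2 * (real n + 1) powr (-s0)
    \<le> \<bar>\<Sum>s\<in>S. c s * (real n + 1) powr (-s)\<bar>) sequentially"
proof -
  define q where "q n = (\<Sum>s\<in>S - {s0}. c s * (real n + 1) powr (s0 - s))" for n :: nat
  have "filterlim (\<lambda>n. real n + 1) at_top sequentially"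
    by real_asymp
  then have "q \<longlonglongrightarrow> (\<Sum>s\<in>S - {s0}. c s * 0)"
    unfolding q_def using assms(3)
    by (intro tendsto_sum tendsto_mult tendsto_const tendsto_neg_powr) auto
  then have "eventually (\<lambda>n. \<bar>q n\<bar> < \<bar>c s0\<bar> / 2) sequentially"
    using assms(4) by (intro order_tendstoD(2)[OF tendsto_rabs_zero]) auto
  then show ?thesis
  proof (rule eventually_mono)
    fix n assume q_small: "\<bar>q n\<bar> < \<bar>c s0\<bar> / 2"
    define x where "x = real n + 1"
    have "x > 0"
      by (simp add: x_def)
    have "(\<Sum>s\<in>S. c s * x powr (-s)) = c s0 * x powr (-s0) + (\<Sum>s\<in>S - {s0}. c s * x powr (-s))"
      using assms(1,2) by (simp add: sum.remove)
    also have "(\<Sum>s\<in>S - {s0}. c s * x powr (-s)) = x powr (-s0) * q n"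
      unfolding q_def sum_distrib_left x_def[symmetric]
      by (rule sum.cong) (simp_all add: powr_add[symmetric])
    finally have "(\<Sum>s\<in>S. c s * x powr (-s)) = x powr (-s0) * (c s0 + q n)"
      by (simp add: algebra_simps)
    moreover have "\<bar>c s0\<bar> / 2 \<le> \<bar>c s0 + q n\<bar>"
      using q_small by linarith
    ultimately show "\<bar>c s0\<bar> / 2 * (real n + 1) powr (-s0) \<le> \<bar>\<Sum>s\<in>S. c s * (real n + 1) powr (-s)\<bar>"
      using \<open>x > 0\<close> by (simp add: x_def[symmetric] abs_mult mult.commute mult_left_mono)
  qed
qed

lemma summable_sum_powr_imp_zero:
  fixes S :: "real set" and c :: "real \<Rightarrow> real"
  assumes "finite S" "S \<subseteq> {..1}"
    and summable: "summable (\<lambda>n. \<bar>\<Sum>s\<in>S. c s * (real n + 1) powr (-s)\<bar>)"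
  shows "\<forall>s\<in>S. c s = 0"
proof (rule ccontr)
  define S' where "S' = {s \<in> S. c s \<noteq> 0}"
  assume "\<not> (\<forall>s\<in>S. c s = 0)"
  then have "S' \<noteq> {}" "finite S'"
    using assms(1) by (auto simp: S'_def)
  define s0 where "s0 = Min S'"
  have "s0 \<in> S'" and min: "\<And>s. s \<in> S' \<Longrightarrow> s \<noteq> s0 \<Longrightarrow> s0 < s"
    using \<open>S' \<noteq> {}\<close> \<open>finite S'\<close> by (auto simp: s0_def order_less_le)
  have sum_eq: "(\<Sum>s\<in>S. c s * (real n + 1) powr (-s)) = (\<Sum>s\<in>S'. c s * (real n + 1) powr (-s))"
    for n
    using assms(1) by (intro sum.mono_neutral_right) (auto simp: S'_def)
  have "eventually (\<lambda>n. \<bar>c s0\<bar> / 2 * (real n + 1) powr (-s0)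
      \<le> \<bar>\<Sum>s\<in>S'. c s * (real n + 1) powr (-s)\<bar>) sequentially"
    using \<open>s0 \<in> S'\<close> by (intro eventually_sum_powr_ge_leading_term[OF \<open>finite S'\<close> \<open>s0 \<in> S'\<close> min])
      (auto simp: S'_def)
  then have "eventually (\<lambda>n. norm (\<bar>c s0\<bar> / 2 * (real n + 1) powr (-s0))
      \<le> \<bar>\<Sum>s\<in>S. c s * (real n + 1) powr (-s)\<bar>) sequentially"
    unfolding sum_eq by (rule eventually_mono) (simp add: abs_mult)
  then have "summable (\<lambda>n. \<bar>c s0\<bar> / 2 * (real n + 1) powr (-s0))"
    using summable by (rule summable_comparison_test_ev)
  then have "summable (\<lambda>n. (real n + 1) powr (-s0))"
    using \<open>s0 \<in> S'\<close> by (simp add: S'_def)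
  then have "summable (\<lambda>n. real (Suc n) powr (-s0))"
    by (simp only: of_nat_Suc add.commute)
  then have "-s0 < -1"
    by (subst (asm) summable_Suc_iff) (simp add: summable_real_powr_iff)
  then show False
    using \<open>s0 \<in> S'\<close> assms(2) by (auto simp: S'_def)
qed

text \<open>For the Warsaw circle \<open>C\<close> is the image of the closing arc, which meets the sine curve only
  in its rightmost minimum and hence misses \<open>sine_tail 0\<close>.\<close>

locale sine_curve_space =
  fixes C W :: "(real \<times> real) set"
  assumes closed_C: "closed C"
    and C_disjoint: "C \<inter> sine_tail 0 = {}"
    and W_eq: "W = warsaw_sine \<union> warsaw_segment \<union> C"
begin

lemma sine_tail_subset_W: "sine_tail n \<subseteq> W"
  using sine_tail_subset_warsaw_sine W_eq by blast

lemma sine_max_in_W: "0 < k \<Longrightarrow> (sine_max k, 1) \<in> W"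
  using sine_tail_subset_W sine_max_mem_sine_tail_iff by blast

lemma segment_top_in_W: "(0, 1) \<in> W"
  unfolding W_eq warsaw_segment_def by auto

lemma openin_sine_tail: "openin (top_of_set W) (sine_tail n)"
  unfolding openin_euclidean_subtopology_iff
proof (intro conjI ballI sine_tail_subset_W)
  fix p assume p: "p \<in> sine_tail n"
  then have p_bounds: "0 < fst p" "fst p < sine_min n"
    by (auto simp: mem_sine_tail_iff)
  have "p \<notin> C"
    using p C_disjoint decseq_sine_tail by (auto simp: decseq_def)
  then obtain d where "d > 0" and d: "\<And>q. q \<in> C \<Longrightarrow> d \<le> dist p q"
    using separate_point_closed[OF closed_C] by blast
  define r where "r = min d (min (fst p) (sine_min n - fst p))"
  show "\<exists>r>0. \<forall>q\<in>W. dist q p < r \<longrightarrow> q \<in> sine_tail n"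
  proof (intro exI[of _ r] conjI ballI impI)
    show "r > 0" using \<open>d > 0\<close> p_bounds by (simp add: r_def)
    fix q assume "q \<in> W" "dist q p < r"
    then have "\<bar>fst q - fst p\<bar> < r"
      using dist_fst_le[of q p] by (simp add: dist_real_def)
    moreover have "q \<notin> C"
      using d[of q] \<open>dist q p < r\<close> by (auto simp: r_def dist_commute)
    ultimately show "q \<in> sine_tail n"
      using \<open>q \<in> W\<close> unfolding W_eq r_def
      by (auto simp: warsaw_sine_def warsaw_segment_def mem_sine_tail_iff)
  qed
qed

text \<open>The last time a path is outside \<open>sine_tail n\<close> it sits at the boundary point
  \<open>(sine_min n, -1)\<close>: it cannot enter from the segment.\<close>

lemma path_entering_sine_tail:
  fixes h :: "real \<Rightarrow> real \<times> real"
  assumes h: "continuous_on {0..1} h" "h ` {0..1} \<subseteq> W"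
    and "h 0 \<notin> sine_tail n" "h 1 \<in> sine_tail n"
  obtains s where "0 \<le> s" "s < 1" "h s = (sine_min n, -1)"
    "\<And>t. s < t \<Longrightarrow> t \<le> 1 \<Longrightarrow> h t \<in> sine_tail n"
proof -
  obtain U where "open U" and U: "sine_tail n = W \<inter> U"
    using openin_sine_tail openin_open by blast
  have tail_iff: "h t \<in> sine_tail n \<longleftrightarrow> h t \<in> U" if "t \<in> {0..1}" for t
    using h(2) that U by blast
  define S where "S = {0..1} \<inter> h -` (- U)"
  have S_iff: "t \<in> S \<longleftrightarrow> t \<in> {0..1} \<and> h t \<notin> sine_tail n" for t
    using tail_iff[of t] by (auto simp: S_def)
  have "closed S"
    unfolding S_def using h(1) \<open>open U\<close> by (intro continuous_closed_preimage) auto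
  moreover have "0 \<in> S" "bdd_above S"
    using \<open>h 0 \<notin> sine_tail n\<close> by (auto simp: S_iff bdd_above_def)
  ultimately have "Sup S \<in> S"
    using closed_contains_Sup by blast
  define s where "s = Sup S"
  have "0 \<le> s"
    using cSup_upper[OF \<open>0 \<in> S\<close> \<open>bdd_above S\<close>] by (simp add: s_def)
  have after: "h t \<in> sine_tail n" if "s < t" "t \<le> 1" for t
  proof -
    have "t \<notin> S"
      using that cSup_upper[OF _ \<open>bdd_above S\<close>, of t] by (auto simp: s_def)
    then show ?thesis
      using that \<open>0 \<le> s\<close> by (simp add: S_iff)
  qed
  have "h s \<notin> sine_tail n" "s \<le> 1"
    using \<open>Sup S \<in> S\<close> by (simp_all add: S_iff flip: s_def)
  moreover have "s \<noteq> 1"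
    using \<open>h s \<notin> sine_tail n\<close> \<open>h 1 \<in> sine_tail n\<close> by auto
  ultimately have "s < 1"
    by simp
  moreover have "0 < fst (h s)" "fst (h s) \<le> sine_min n" "snd (h s) = sin (1 / fst (h s))"
    using sine_graph_path_start[OF \<open>s < 1\<close> continuous_on_subset[OF h(1)] after] \<open>0 \<le> s\<close>
    by auto
  ultimately have "h s = (sine_min n, -1)"
    using \<open>h s \<notin> sine_tail n\<close> by (auto simp: mem_sine_tail_iff prod_eq_iff)
  then show thesis
    using that \<open>0 \<le> s\<close> \<open>s < 1\<close> after by blast
qed

lemma slow_path_into_sine_tail:
  assumes h: "continuous_on {0..1} h" "h ` {0..1} \<subseteq> W"
    and "0 < N" "slow_path N h" "h 1 \<in> sine_tail (n + N + 1)"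
  shows "h 0 \<in> sine_tail n"
proof (rule ccontr)
  assume "h 0 \<notin> sine_tail n"
  moreover have "h 1 \<in> sine_tail n"
    using assms(5) decseq_sine_tail[unfolded decseq_def, rule_format, of n "n + N + 1"] by auto
  ultimately obtain s where s: "0 \<le> s" "s < 1" "h s = (sine_min n, -1)"
    and after: "\<And>t. s < t \<Longrightarrow> t \<le> 1 \<Longrightarrow> h t \<in> sine_tail n"
    using path_entering_sine_tail[OF h] by blast
  have graph: "snd (h t) = sin (1 / fst (h t))" if "s \<le> t" "t \<le> 1" for t
    using that s(3) after[of t] by (cases "t = s") (auto simp: mem_sine_tail_iff)
  have "s + real (N + 1) * (1 / real N) \<le> 1"
  proof (rule sine_graph_crossing_time[where x = "\<lambda>t. fst (h t)" and n = n])
    show "continuous_on {s..1} (\<lambda>t. fst (h t))"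
      by (intro continuous_on_fst continuous_on_subset[OF h(1)]) (use s in auto)
    show "\<bar>sin (1 / fst (h u)) - sin (1 / fst (h v))\<bar> < 2"
      if "s \<le> u" "u \<le> v" "v \<le> 1" "v - u \<le> 1 / real N" for u v
      using \<open>slow_path N h\<close> that graph[of u] graph[of v] s(1) unfolding slow_path_def
      by (metis order.trans)
    show "fst (h 1) \<le> sine_min (n + (N + 1))"
      using assms(5) by (simp add: mem_sine_tail_iff add.assoc)
  qed (use s in auto)
  moreover have "1 < real (N + 1) * (1 / real N)"
    using \<open>0 < N\<close> by (simp add: field_simps)
  ultimately show False
    using s(1) by linarith
qed

lemma edge_slow_path_into_sine_tail:
  assumes \<sigma>: "singular_simplex 1 (top_of_set W) \<sigma>"
    and "0 < N" "slow_path N (\<sigma> \<circ> edge_point)"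
    and "b \<in> {0, 1}" "\<sigma> (edge_point b) \<in> sine_tail (n + N + 1)"
  shows "\<sigma> (edge_point (1 - b)) \<in> sine_tail n"
proof -
  define h where "h = \<sigma> \<circ> edge_point"
  have "continuous_map (top_of_set {0..1}) (top_of_set W) h"
    unfolding h_def using \<sigma> by (rule singular_simplex_1_path)
  then have h: "continuous_on {0..1} h" "h ` {0..1} \<subseteq> W"
    by (auto simp: continuous_map_in_subtopology)
  consider "b = 1" | "b = 0"
    using \<open>b \<in> {0, 1}\<close> by blast
  then show ?thesis
  proof cases
    case 1
    then show ?thesis
      using slow_path_into_sine_tail[OF h \<open>0 < N\<close>] assms(3,5) by (simp add: h_def)
  next
    case 2
    have "continuous_on {0..1} (\<lambda>t. h (1 - t))"
      by (rule continuous_on_compose2[OF h(1)]) (auto intro!: continuous_intros)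
    moreover have "(\<lambda>t. h (1 - t)) ` {0..1} \<subseteq> W"
      using h(2) by auto
    ultimately show ?thesis
      using slow_path_into_sine_tail[of "\<lambda>t. h (1 - t)"] \<open>0 < N\<close>
        slow_path_reverse[OF assms(3)] assms(5) 2
      by (simp add: h_def)
  qed
qed

abbreviation X0 :: "((nat \<Rightarrow> real) \<Rightarrow> real \<times> real) topology" where
  "X0 \<equiv> simplex_space 0 (top_of_set W)"

abbreviation X1 :: "((nat \<Rightarrow> real) \<Rightarrow> real \<times> real) topology" where
  "X1 \<equiv> simplex_space 1 (top_of_set W)"

definition tail_simplices :: "nat \<Rightarrow> ((nat \<Rightarrow> real) \<Rightarrow> real \<times> real) set" where
  "tail_simplices n = {\<tau> \<in> topspace X0. \<tau> simplex0_point \<in> sine_tail n}"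

definition edge_in_tail :: "real \<Rightarrow> nat \<Rightarrow> ((nat \<Rightarrow> real) \<Rightarrow> real \<times> real) set" where
  "edge_in_tail t n = {\<sigma> \<in> topspace X1. \<sigma> (edge_point t) \<in> sine_tail n}"

lemma borel_sine_tail: "sine_tail n \<in> borel_sets_of (top_of_set W)"
  by (rule borel_sets_of_openin[OF openin_sine_tail])

lemma borel_tail_simplices: "tail_simplices n \<in> borel_sets_of X0"
  unfolding tail_simplices_def
  by (rule borel_sets_of_preimage[OF continuous_map_simplex_space_eval borel_sine_tail])
    (simp add: standard_simplex_0_eq)

lemma borel_edge_in_tail: "t \<in> {0..1} \<Longrightarrow> edge_in_tail t n \<in> borel_sets_of X1"
  unfolding edge_in_tail_def
  by (rule borel_sets_of_preimage[OF continuous_map_simplex_space_eval borel_sine_tail])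
    (rule edge_point_in_standard_simplex)

lemma slow_edge_vertex_depth:
  assumes "singular_simplex 1 (top_of_set W) \<sigma>" "0 < N" "slow_path N (\<sigma> \<circ> edge_point)"
    and "b \<in> {0, 1}" "N + 1 \<le> n"
    and "\<sigma> (edge_point b) \<in> sine_tail n" "\<sigma> (edge_point (1 - b)) \<notin> sine_tail n"
  obtains j where "j \<le> N + 1" "\<sigma> (edge_point (1 - b)) \<in> sine_tail (n - j) - sine_tail (Suc (n - j))"
proof -
  have "\<sigma> (edge_point b) \<in> sine_tail ((n - (N + 1)) + N + 1)"
    using assms(5,6) by simp
  then have "\<sigma> (edge_point (1 - b)) \<in> sine_tail (n - (N + 1))"
    using edge_slow_path_into_sine_tail assms(1-4) by blast
  then obtain m where "n - (N + 1) \<le> m" "m < n" "\<sigma> (edge_point (1 - b)) \<in> sine_tail m - sine_tail (Suc m)"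
    using decseq_Diff_Suc_witness[OF decseq_sine_tail _ assms(7)] by blast
  then show thesis
    using that[of "n - m"] by simp
qed

lemma summable_edge_in_tail_Diff:
  assumes \<nu>: "\<nu> \<in> MT_chains (top_of_set W) 1" and b: "b \<in> {0, 1}"
  shows "summable (\<lambda>n. \<bar>\<nu> (edge_in_tail b n - edge_in_tail (1 - b) n)\<bar>)"
proof -
  have fsbm: "finite_signed_borel_measure X1 \<nu>"
    using \<nu> by (simp add: MT_chains_def)
  obtain K where K: "compactin X1 K"
    and null: "\<And>A. A \<in> borel_sets_of X1 \<Longrightarrow> A \<inter> K = {} \<Longrightarrow> \<nu> A = 0"
    using \<nu> by (auto simp: MT_chains_def has_compact_carrier_def)
  obtain N where "0 < N" and slow: "\<And>\<sigma>. \<sigma> \<in> K \<Longrightarrow> slow_path N (\<sigma> \<circ> edge_point)"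
    using compactin_simplex_space_slow[OF K] by blast
  have "b \<in> {0..1}" "1 - b \<in> {0..1}"
    using b by auto
  define Q where "Q m = {\<sigma> \<in> topspace X1. \<sigma> (edge_point (1 - b)) \<in> sine_tail m - sine_tail (Suc m)}"
    for m
  show ?thesis
  proof (rule fsbm_summable_abs_banded[OF fsbm null, where Q = Q and L = "N + 1"])
    show "disjoint_family Q"
      using decseq_disjoint_family_Diff_Suc[OF decseq_sine_tail]
      by (auto simp: Q_def disjoint_family_on_def)
    show "Q m \<in> borel_sets_of X1" for m
      unfolding Q_def using edge_point_in_standard_simplex[OF \<open>1 - b \<in> {0..1}\<close>]
      by (intro borel_sets_of_preimage[OF continuous_map_simplex_space_eval]
          borel_sets.Diff borel_sine_tail)
    show "edge_in_tail b n - edge_in_tail (1 - b) n \<in> borel_sets_of X1" for n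
      using \<open>b \<in> {0..1}\<close> \<open>1 - b \<in> {0..1}\<close> by (intro borel_sets.Diff borel_edge_in_tail)
    fix n assume "N + 1 \<le> n"
    show "(edge_in_tail b n - edge_in_tail (1 - b) n) \<inter> K \<subseteq> (\<Union>j\<le>N + 1. Q (n - j))"
    proof
      fix \<sigma> assume "\<sigma> \<in> (edge_in_tail b n - edge_in_tail (1 - b) n) \<inter> K"
      then have "singular_simplex 1 (top_of_set W) \<sigma>" "slow_path N (\<sigma> \<circ> edge_point)"
        "\<sigma> (edge_point b) \<in> sine_tail n" "\<sigma> (edge_point (1 - b)) \<notin> sine_tail n"
        using slow by (auto simp: edge_in_tail_def)
      then obtain j where "j \<le> N + 1" "\<sigma> \<in> Q (n - j)"
        using slow_edge_vertex_depth[OF _ \<open>0 < N\<close> _ b \<open>N + 1 \<le> n\<close>] by (auto simp: Q_def)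
      then show "\<sigma> \<in> (\<Union>j\<le>N + 1. Q (n - j))"
        by blast
    qed
  qed
qed

lemma MT_boundary_tail_simplices:
  "MT_boundary (top_of_set W) 1 \<nu> (tail_simplices n) = \<nu> (edge_in_tail 1 n) - \<nu> (edge_in_tail 0 n)"
proof -
  have "{\<sigma> \<in> topspace X1. singular_face 1 i \<sigma> \<in> tail_simplices n} = edge_in_tail (1 - real i) n"
    if "i \<le> 1" for i
  proof -
    have face: "singular_face 1 i \<sigma> simplex0_point = \<sigma> (edge_point (1 - real i))" for \<sigma>
      using that singular_face_1_0 singular_face_1_1 by (cases i) auto
    have "singular_face 1 i \<sigma> \<in> topspace X0" if "\<sigma> \<in> topspace X1" for \<sigma>
      using singular_simplex_singular_face[of 1 _ \<sigma> i] that \<open>i \<le> 1\<close> by simp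
    then show ?thesis
      by (auto simp: tail_simplices_def edge_in_tail_def face[unfolded One_nat_def])
  qed
  then show ?thesis
    by (simp add: MT_boundary_def MT_face_def borel_tail_simplices)
qed

lemma summable_MT_boundary_tail_simplices:
  assumes \<nu>: "\<nu> \<in> MT_chains (top_of_set W) 1"
  shows "summable (\<lambda>n. \<bar>MT_boundary (top_of_set W) 1 \<nu> (tail_simplices n)\<bar>)"
proof -
  have fsbm: "finite_signed_borel_measure X1 \<nu>"
    using \<nu> by (simp add: MT_chains_def)
  let ?E = "edge_in_tail"
  have eq: "MT_boundary (top_of_set W) 1 \<nu> (tail_simplices n) =
      \<nu> (?E 1 n - ?E 0 n) - \<nu> (?E 0 n - ?E 1 n)" for n
  proof -
    have "?E 1 n \<in> borel_sets_of X1" "?E 0 n \<in> borel_sets_of X1"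
      by (intro borel_edge_in_tail; simp)+
    then have "\<nu> (?E 1 n) = \<nu> (?E 1 n \<inter> ?E 0 n) + \<nu> (?E 1 n - ?E 0 n)"
      "\<nu> (?E 0 n) = \<nu> (?E 1 n \<inter> ?E 0 n) + \<nu> (?E 0 n - ?E 1 n)"
      using fsbm_split[OF fsbm] by (metis Int_commute)+
    then show ?thesis
      unfolding MT_boundary_tail_simplices by simp
  qed
  have "summable (\<lambda>n. \<bar>\<nu> (?E 1 n - ?E 0 n)\<bar> + \<bar>\<nu> (?E 0 n - ?E 1 n)\<bar>)"
    using summable_edge_in_tail_Diff[OF \<nu>, of 1] summable_edge_in_tail_Diff[OF \<nu>, of 0]
    by (intro summable_add) simp_all
  then show ?thesis
    unfolding eq by (rule summable_comparison_test'[where N = 0]) simp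
qed

section \<open>An uncountable independent family of 0-chains\<close>

definition peak_simplex :: "nat \<Rightarrow> (nat \<Rightarrow> real) \<Rightarrow> real \<times> real" where
  "peak_simplex k = const_simplex (sine_max (Suc k), 1)"

text \<open>\<open>peak_chain s\<close> puts the mass \<open>tail_weight s k\<close> on the constant simplex at the maximum
  \<open>(sine_max (k + 1), 1)\<close>, which lies in \<open>sine_tail n\<close> exactly when \<open>n \<le> k\<close>.\<close>

definition peak_chain :: "real \<Rightarrow> ((nat \<Rightarrow> real) \<Rightarrow> real \<times> real) set \<Rightarrow> real" where
  "peak_chain s A =
     (if A \<in> borel_sets_of X0 then measure (tail_measure s) {k. peak_simplex k \<in> A} else 0)"

lemma peak_simplex_in_topspace: "peak_simplex k \<in> topspace X0"
  using sine_max_in_W[of "Suc k"]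
  by (simp add: peak_simplex_def singular_simplex_const_simplex)

lemma peak_simplex_limit: "limitin X0 peak_simplex (const_simplex (0, 1)) sequentially"
proof -
  have "((\<lambda>k. (sine_max (Suc k), 1::real)) \<longlongrightarrow> (0, 1)) sequentially"
    by (intro tendsto_Pair LIMSEQ_Suc[OF sine_max_tendsto_0] tendsto_const)
  then have "limitin (top_of_set W) (\<lambda>k. (sine_max (Suc k), 1)) (0, 1) sequentially"
    using sine_max_in_W segment_top_in_W by (simp add: limitin_subtopology)
  moreover have "peak_simplex = const_simplex \<circ> (\<lambda>k. (sine_max (Suc k), 1))"
    by (simp add: fun_eq_iff peak_simplex_def)
  ultimately show ?thesis
    using continuous_map_limit[OF continuous_map_const_simplex] by metis
qed

lemma peak_chain_in_MT_chains:
  assumes "0 < s"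
  shows "peak_chain s \<in> MT_chains (top_of_set W) 0"
proof -
  interpret finite_measure "tail_measure s"
    using finite_measure_tail_measure[OF assms] .
  have "(\<lambda>n. peak_chain s (A n)) sums peak_chain s (\<Union>n. A n)"
    if A: "range A \<subseteq> borel_sets_of X0" "disjoint_family A" for A
  proof -
    have "(\<lambda>n. measure (tail_measure s) {k. peak_simplex k \<in> A n})
        sums measure (tail_measure s) (\<Union>n. {k. peak_simplex k \<in> A n})"
      using A(2) by (intro finite_measure_UNION) (auto simp: tail_measure_def disjoint_family_on_def)
    moreover have "(\<Union>n. {k. peak_simplex k \<in> A n}) = {k. peak_simplex k \<in> (\<Union>n. A n)}"
      by auto
    moreover have "peak_chain s (A n) = measure (tail_measure s) {k. peak_simplex k \<in> A n}" for n
      using A(1) by (auto simp: peak_chain_def)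
    moreover have "(\<Union>n. A n) \<in> borel_sets_of X0"
      using A(1) by (rule borel_sets.countable_UN)
    ultimately show ?thesis
      by (simp add: peak_chain_def)
  qed
  then have "finite_signed_borel_measure X0 (peak_chain s)"
    by (simp add: finite_signed_borel_measure_def peak_chain_def)
  moreover have "has_compact_carrier X0 (peak_chain s)"
    unfolding has_compact_carrier_def
  proof (intro exI conjI ballI impI)
    show "compactin X0 (insert (const_simplex (0, 1)) (range peak_simplex))"
      using peak_simplex_in_topspace
      by (intro compactin_sequence_with_limit[OF peak_simplex_limit]) auto
    fix A assume "A \<inter> insert (const_simplex (0, 1)) (range peak_simplex) = {}"
    then have "{k. peak_simplex k \<in> A} = {}"
      by auto
    then show "peak_chain s A = 0"
      by (simp add: peak_chain_def)
  qed
  ultimately show ?thesis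
    by (simp add: MT_chains_def)
qed

lemma peak_chain_tail_simplices:
  assumes "0 < s"
  shows "peak_chain s (tail_simplices n) = (real n + 1) powr (-s)"
proof -
  have "{k. peak_simplex k \<in> tail_simplices n} = {n..}"
    using peak_simplex_in_topspace
    by (auto simp: tail_simplices_def peak_simplex_def sine_max_mem_sine_tail_iff)
  then show ?thesis
    using borel_tail_simplices measure_tail_measure_atLeast[OF assms] by (simp add: peak_chain_def)
qed

lemma inj_on_peak_chain: "inj_on peak_chain {0<..}"
proof (rule inj_onI)
  fix s t :: real assume "s \<in> {0<..}" "t \<in> {0<..}" "peak_chain s = peak_chain t"
  then have "(real 1 + 1) powr (-s) = (real 1 + 1) powr (-t)"
    using peak_chain_tail_simplices[of s 1] peak_chain_tail_simplices[of t 1] by simp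
  then show "s = t"
    by (simp add: powr_inj)
qed

lemma peak_chains_independent:
  assumes S: "finite S" "S \<subseteq> {0<..1}" and \<nu>: "\<nu> \<in> MT_chains (top_of_set W) 1"
    and boundary: "MT_boundary (top_of_set W) 1 \<nu> = (\<lambda>A. \<Sum>s\<in>S. c s * peak_chain s A)"
  shows "\<forall>s\<in>S. c s = 0"
proof -
  have "MT_boundary (top_of_set W) 1 \<nu> (tail_simplices n) = (\<Sum>s\<in>S. c s * (real n + 1) powr (-s))"
    for n
    unfolding boundary using S(2) by (intro sum.cong) (auto simp: peak_chain_tail_simplices)
  then show ?thesis
    using summable_MT_boundary_tail_simplices[OF \<nu>] S by (intro summable_sum_powr_imp_zero) auto
qed

lemma MT_H0_uncountable_dim: "MT_H0_uncountable_dim (top_of_set W)"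
  unfolding MT_H0_uncountable_dim_def
proof (intro exI[of _ "peak_chain ` {0<..1}"] conjI allI impI)
  have inj: "inj_on peak_chain {0<..1}"
    using inj_on_peak_chain by (rule inj_on_subset) auto
  show "peak_chain ` {0<..1} \<subseteq> MT_chains (top_of_set W) 0"
    using peak_chain_in_MT_chains by auto
  show "uncountable (peak_chain ` {0<..1})"
  proof
    assume "countable (peak_chain ` {0<..1})"
    then have "countable {0<..1::real}"
      using inj by (rule countable_image_inj_on)
    then show False
      using uncountable_half_open_interval_2[of 0 1] by simp
  qed
  fix F c
  assume F: "finite F" "F \<subseteq> peak_chain ` {0<..1}"
    and "\<exists>\<nu>\<in>MT_chains (top_of_set W) 1. MT_boundary (top_of_set W) 1 \<nu> = (\<lambda>A. \<Sum>\<mu>\<in>F. c \<mu> * \<mu> A)"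
  then obtain \<nu> where \<nu>: "\<nu> \<in> MT_chains (top_of_set W) 1"
    and boundary: "MT_boundary (top_of_set W) 1 \<nu> = (\<lambda>A. \<Sum>\<mu>\<in>F. c \<mu> * \<mu> A)"
    by blast
  obtain S where S: "S \<subseteq> {0<..1}" "F = peak_chain ` S"
    using F(2) unfolding subset_image_iff by blast
  have inj_S: "inj_on peak_chain S"
    using inj S(1) by (rule inj_on_subset)
  have "finite S"
    using F(1) S(2) finite_imageD[OF _ inj_S] by simp
  moreover have "MT_boundary (top_of_set W) 1 \<nu> = (\<lambda>A. \<Sum>s\<in>S. c (peak_chain s) * peak_chain s A)"
    unfolding boundary S(2) sum.reindex[OF inj_S] by (simp add: o_def)
  ultimately have "\<forall>s\<in>S. c (peak_chain s) = 0"
    by (rule peak_chains_independent[OF _ S(1) \<nu>])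
  then show "\<forall>\<mu>\<in>F. c \<mu> = 0"
    using S(2) by blast
qed

end

theorem theorem4:
  fixes g :: "real \<Rightarrow> real \<times> real" and W :: "(real \<times> real) set"
  assumes "arc g"
    and "pathstart g = (0, -1)"
    and "pathfinish g = (2 / (3 * pi), -1)"
    and "path_image g \<inter> (warsaw_sine \<union> warsaw_segment) = {(0, -1), (2 / (3 * pi), -1)}"
    and "W = warsaw_sine \<union> warsaw_segment \<union> path_image g"
  shows "MT_H0_uncountable_dim (top_of_set W)"
proof -
  have "closed (path_image g)"
    using \<open>arc g\<close> by (simp add: arc_imp_path compact_imp_closed compact_path_image)
  moreover have "path_image g \<inter> sine_tail 0 = {}"
  proof -
    have "path_image g \<inter> sine_tail 0 \<subseteq> {(0, -1), (2 / (3 * pi), -1)}"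
      using assms(4) sine_tail_subset_warsaw_sine[of 0] by blast
    then show ?thesis
      by (fastforce simp: mem_sine_tail_iff sine_min_0)
  qed
  ultimately interpret sine_curve_space "path_image g" W
    using assms(5) by unfold_locales
  show ?thesis
    by (rule MT_H0_uncountable_dim)
qed

end
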